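(* Let $\rho$ be a representation of $D^{2,2,2}$, let $\{i,j,k\}=\{1,2,3\}$, and let $a,b\in D^{2,2,2}$. Then: 1. $\psi_i(a)+\psi_i(b)=\psi_i(a+b)$; 2. $\psi_i(a)\cap\psi_i(b)=\psi_i\big((a+x_i)(b+x_jx_k)\big)$; 3. $\psi_i(a)\cap\psi_i(b)=\psi_i\big(a(b+x_i+x_jx_k)\big)$.
   Context: $D^{2,2,2}$ is the modular lattice generated by $x_1,y_1,x_2,y_2,x_3,y_3$ subject only to $x_i\subseteq y_i$ ($i=1,2,3$), with a greatest element $I$ adjoined. Meet is written $ab$, join $a+b$. A representation $\rho$ of $D^{2,2,2}$ in a finite-dimensional vector space $X_0$ is a lattice morphism from $D^{2,2,2}$ to the subspace lattice of $X_0$, with $\rho(I)=X_0$. Write $X_i=\rho(x_i)\subseteq Y_i=\rho(y_i)$. Put $R=Y_1\oplus Y_2\oplus Y_3$ and $X^1_0=\{(\eta_1,\eta_2,\eta_3)\in R:\sum\eta_i=0\}$. Define subspaces of $R$: - $G_i$: triples with $i$-th coordinate in $Y_i$ and the others $0$; - $G'_i$: triples with $i$-th coordinate in $X_i$; - $H'_i$: triples with $i$-th coordinate $0$. $\Phi^+\rho$ is the representation in $X^1_0$ with $\Phi^+\rho(y_i)=G'_i\cap X^1_0$, $\Phi^+\rho(x_i)=H'_i\cap X^1_0$, $\Phi^+\rho(I)=X^1_0$. Set $\nu^1(a)=\Phi^+\rho(a)\subseteq R$. The joint map is $\psi_i(a)=X^1_0+G_i\cap(H'_i+\nu^1(a))$.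 *)

theory Defs
  imports Main "HOL-Library.Function_Algebras"
begin

datatype idx = I1 | I2 | I3

text \<open>Lattice terms over the generators of D^{2,2,2} (with adjoined top I).
  Every element of D^{2,2,2} is denoted by such a term.\<close>
datatype lterm = Gx idx | Gy idx | Top | Meet lterm lterm | Join lterm lterm

definition ssum :: "'v::plus set \<Rightarrow> 'v set \<Rightarrow> 'v set" where
  "ssum A B = {a + b | a b. a \<in> A \<and> b \<in> B}"

definition is_subspace :: "('n::finite \<Rightarrow> 'k::field) set \<Rightarrow> bool" where
  "is_subspace S \<longleftrightarrow> 0 \<in> S \<and> (\<forall>x\<in>S. \<forall>y\<in>S. x + y \<in> S)
      \<and> (\<forall>c. \<forall>x\<in>S. (\<lambda>n. c * x n) \<in> S)"

text \<open>Value of a lattice term under the representation determined by the images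
  of the generators (top, x_i, y_i); meet is intersection, join is subspace sum.\<close>
fun ev :: "'v::plus set \<Rightarrow> (idx \<Rightarrow> 'v set) \<Rightarrow> (idx \<Rightarrow> 'v set) \<Rightarrow> lterm \<Rightarrow> 'v set" where
  "ev T X Y (Gx i) = X i"
| "ev T X Y (Gy i) = Y i"
| "ev T X Y Top = T"
| "ev T X Y (Meet a b) = ev T X Y a \<inter> ev T X Y b"
| "ev T X Y (Join a b) = ssum (ev T X Y a) (ev T X Y b)"

definition Rsp :: "(idx \<Rightarrow> ('n \<Rightarrow> 'k::field) set) \<Rightarrow> (idx \<Rightarrow> 'n \<Rightarrow> 'k) set" where
  "Rsp Y = {\<eta>. \<forall>j. \<eta> j \<in> Y j}"

definition X10 :: "(idx \<Rightarrow> ('n \<Rightarrow> 'k::field) set) \<Rightarrow> (idx \<Rightarrow> 'n \<Rightarrow> 'k) set" where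
  "X10 Y = {\<eta> \<in> Rsp Y. \<eta> I1 + \<eta> I2 + \<eta> I3 = 0}"

definition Gsp :: "(idx \<Rightarrow> ('n \<Rightarrow> 'k::field) set) \<Rightarrow> idx \<Rightarrow> (idx \<Rightarrow> 'n \<Rightarrow> 'k) set" where
  "Gsp Y i = {\<eta> \<in> Rsp Y. \<forall>j. j \<noteq> i \<longrightarrow> \<eta> j = 0}"

definition G'sp :: "(idx \<Rightarrow> ('n \<Rightarrow> 'k::field) set) \<Rightarrow> (idx \<Rightarrow> ('n \<Rightarrow> 'k) set) \<Rightarrow> idx \<Rightarrow> (idx \<Rightarrow> 'n \<Rightarrow> 'k) set" where
  "G'sp X Y i = {\<eta> \<in> Rsp Y. \<eta> i \<in> X i}"

definition H'sp :: "(idx \<Rightarrow> ('n \<Rightarrow> 'k::field) set) \<Rightarrow> idx \<Rightarrow> (idx \<Rightarrow> 'n \<Rightarrow> 'k) set" where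
  "H'sp Y i = {\<eta> \<in> Rsp Y. \<eta> i = 0}"

text \<open>nu^1(a) = Phi^+ rho (a), a subspace of R.\<close>
definition nu1 :: "(idx \<Rightarrow> ('n \<Rightarrow> 'k::field) set) \<Rightarrow> (idx \<Rightarrow> ('n \<Rightarrow> 'k) set) \<Rightarrow> lterm \<Rightarrow> (idx \<Rightarrow> 'n \<Rightarrow> 'k) set" where
  "nu1 X Y a = ev (X10 Y) (\<lambda>i. H'sp Y i \<inter> X10 Y) (\<lambda>i. G'sp X Y i \<inter> X10 Y) a"

definition psi :: "(idx \<Rightarrow> ('n \<Rightarrow> 'k::field) set) \<Rightarrow> (idx \<Rightarrow> ('n \<Rightarrow> 'k) set) \<Rightarrow> idx \<Rightarrow> lterm \<Rightarrow> (idx \<Rightarrow> 'n \<Rightarrow> 'k) set" where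
  "psi X Y i a = ssum (X10 Y) (Gsp Y i \<inter> ssum (H'sp Y i) (nu1 X Y a))"

end

theory Submission
  imports Defs
begin

text \<open>A triple \<open>\<eta> \<in> R\<close> lies in \<open>\<psi>\<^sub>i(a)\<close> exactly when \<open>\<eta>\<^sub>1 + \<eta>\<^sub>2 + \<eta>\<^sub>3\<close> lies in the projection
  \<open>\<pi>\<^sub>i(\<nu>\<^sup>1(a))\<close> of \<open>\<nu>\<^sup>1(a) \<subseteq> X\<^sup>1\<^sub>0\<close> to the \<open>i\<close>-th coordinate, so \<open>\<psi>\<^sub>i\<close> is the preimage of
  \<open>\<pi>\<^sub>i \<circ> \<nu>\<^sup>1\<close> under the coordinate sum, which respects sums and intersections of subspaces of \<open>Y\<^sub>i\<close>.
  Joins are then preserved because \<open>\<pi>\<^sub>i\<close> is additive. For meets, \<open>\<nu>\<^sup>1(x\<^sub>jx\<^sub>k) = 0\<close> and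
  \<open>\<nu>\<^sup>1(x\<^sub>i)\<close> is the kernel \<open>K\<close> of \<open>\<pi>\<^sub>i\<close> on \<open>X\<^sup>1\<^sub>0\<close>, and parts 2 and 3 reduce to the
  identity \<open>\<pi>\<^sub>i((N + K) \<inter> M) = \<pi>\<^sub>i(N) \<inter> \<pi>\<^sub>i(M)\<close> for subspaces \<open>N, M\<close> of \<open>X\<^sup>1\<^sub>0\<close>.\<close>

definition add_subgroup :: "'a::ab_group_add set \<Rightarrow> bool" where
  "add_subgroup S \<longleftrightarrow> 0 \<in> S \<and> (\<forall>x\<in>S. \<forall>y\<in>S. x + y \<in> S) \<and> (\<forall>x\<in>S. - x \<in> S)"

lemma add_subgroup_diff: "add_subgroup S \<Longrightarrow> x \<in> S \<Longrightarrow> y \<in> S \<Longrightarrow> x - y \<in> S"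
  unfolding add_subgroup_def by (metis diff_conv_add_uminus)

lemma add_subgroup_Int: "add_subgroup A \<Longrightarrow> add_subgroup B \<Longrightarrow> add_subgroup (A \<inter> B)"
  unfolding add_subgroup_def by blast

lemma is_subspace_add_subgroup: "is_subspace S \<Longrightarrow> add_subgroup S"
proof -
  assume S: "is_subspace S"
  have "- x \<in> S" if "x \<in> S" for x
  proof -
    have "(\<lambda>n. (- 1) * x n) \<in> S" using S that unfolding is_subspace_def by blast
    moreover have "(\<lambda>n. (- 1) * x n) = - x" by auto
    ultimately show ?thesis by simp
  qed
  with S show ?thesis unfolding is_subspace_def add_subgroup_def by blast
qed

lemma ssumI: "x \<in> A \<Longrightarrow> y \<in> B \<Longrightarrow> x + y \<in> ssum A B"
  unfolding ssum_def by blast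

lemma ssumE: "z \<in> ssum A B \<Longrightarrow> (\<And>x y. z = x + y \<Longrightarrow> x \<in> A \<Longrightarrow> y \<in> B \<Longrightarrow> P) \<Longrightarrow> P"
  unfolding ssum_def by blast

lemma ssum_least: "add_subgroup C \<Longrightarrow> A \<subseteq> C \<Longrightarrow> B \<subseteq> C \<Longrightarrow> ssum A B \<subseteq> C"
  unfolding ssum_def add_subgroup_def by blast

lemma ssum_zero_right: "0 \<in> S \<Longrightarrow> ssum S {0::'a::monoid_add} = S"
  by (auto simp: ssum_def)

lemma add_subgroup_ssum:
  assumes A: "add_subgroup A" and B: "add_subgroup B"
  shows "add_subgroup (ssum A B)"
  unfolding add_subgroup_def
proof (intro conjI ballI)
  show "0 \<in> ssum A B"
    using A B ssumI[of 0 A 0 B] by (simp add: add_subgroup_def)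
next
  fix x y assume "x \<in> ssum A B" "y \<in> ssum A B"
  then obtain a b a' b' where "x = a + b" "y = a' + b'" "a \<in> A" "b \<in> B" "a' \<in> A" "b' \<in> B"
    by (auto elim!: ssumE)
  moreover have "(a + b) + (a' + b') = (a + a') + (b + b')" by (simp add: algebra_simps)
  ultimately show "x + y \<in> ssum A B"
    using A B by (metis add_subgroup_def ssumI)
next
  fix x assume "x \<in> ssum A B"
  then obtain a b where "x = a + b" "a \<in> A" "b \<in> B" by (rule ssumE)
  moreover have "- (a + b) = - a + - b" by simp
  ultimately show "- x \<in> ssum A B"
    using A B by (metis add_subgroup_def ssumI)
qed

lemma image_ssum:
  assumes "\<And>x y. f (x + y) = f x + f y"
  shows "f ` ssum N M = ssum (f ` N) (f ` M)"
proof
  show "f ` ssum N M \<subseteq> ssum (f ` N) (f ` M)"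
    using assms by (auto intro!: ssumI elim!: ssumE)
  show "ssum (f ` N) (f ` M) \<subseteq> f ` ssum N M"
  proof
    fix z assume "z \<in> ssum (f ` N) (f ` M)"
    then obtain x y where "z = f x + f y" "x \<in> N" "y \<in> M" by (auto elim!: ssumE)
    then show "z \<in> f ` ssum N M" by (metis assms imageI ssumI)
  qed
qed

text \<open>A modular law: the kernel of \<open>f\<close> on \<open>S\<close> absorbs the difference of an element
  of \<open>N\<close> and an element of \<open>M\<close> with the same image.\<close>
lemma image_ssum_kernel_Int:
  fixes f :: "'a::ab_group_add \<Rightarrow> 'b::ab_group_add"
  assumes S: "add_subgroup S" and "N \<subseteq> S" "M \<subseteq> S"
    and f: "\<And>x y. f (x + y) = f x + f y"
  shows "f ` (ssum N {v \<in> S. f v = 0} \<inter> M) = f ` N \<inter> f ` M"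
proof
  show "f ` (ssum N {v \<in> S. f v = 0} \<inter> M) \<subseteq> f ` N \<inter> f ` M"
    using f by (auto elim!: ssumE)
next
  show "f ` N \<inter> f ` M \<subseteq> f ` (ssum N {v \<in> S. f v = 0} \<inter> M)"
  proof
    fix z assume "z \<in> f ` N \<inter> f ` M"
    then obtain u w where u: "u \<in> N" "f u = z" and w: "w \<in> M" "f w = z"
      by (metis IntE imageE)
    have "f (w - u) = 0" using f[of "w - u" u] u w by simp
    moreover have "w - u \<in> S" using S \<open>N \<subseteq> S\<close> \<open>M \<subseteq> S\<close> u w by (blast intro: add_subgroup_diff)
    ultimately have "u + (w - u) \<in> ssum N {v \<in> S. f v = 0}" using u by (blast intro: ssumI)
    with w show "z \<in> f ` (ssum N {v \<in> S. f v = 0} \<inter> M)" by auto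
  qed
qed

lemma ev_add_subgroup:
  assumes "add_subgroup T"
    and "\<And>l. add_subgroup (Xs l) \<and> Xs l \<subseteq> T" and "\<And>l. add_subgroup (Ys l) \<and> Ys l \<subseteq> T"
  shows "add_subgroup (ev T Xs Ys a) \<and> ev T Xs Ys a \<subseteq> T"
  by (induction a) (auto simp: assms add_subgroup_Int add_subgroup_ssum ssum_least)

definition coord_sum :: "(idx \<Rightarrow> 'a::ab_group_add) \<Rightarrow> 'a" where
  "coord_sum \<eta> = \<eta> I1 + \<eta> I2 + \<eta> I3"

lemma coord_sum_add [simp]: "coord_sum (\<eta> + \<zeta>) = coord_sum \<eta> + coord_sum \<zeta>"
  by (simp add: coord_sum_def algebra_simps)

lemma coord_sum_diff [simp]: "coord_sum (\<eta> - \<zeta>) = coord_sum \<eta> - coord_sum \<zeta>"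
  by (simp add: coord_sum_def algebra_simps)

lemma coord_sum_zero [simp]: "coord_sum 0 = 0"
  by (simp add: coord_sum_def)

lemma coord_sum_uminus [simp]: "coord_sum (- \<eta>) = - coord_sum \<eta>"
  by (simp add: coord_sum_def algebra_simps)

lemma coord_sum_single [simp]: "coord_sum (0(i := x)) = x"
  by (cases i) (simp_all add: coord_sum_def)

definition sum_preimage ::
    "(idx \<Rightarrow> ('n \<Rightarrow> 'k::field) set) \<Rightarrow> ('n \<Rightarrow> 'k) set \<Rightarrow> (idx \<Rightarrow> 'n \<Rightarrow> 'k) set" where
  "sum_preimage Y A = {\<eta> \<in> Rsp Y. coord_sum \<eta> \<in> A}"

lemma X10_eq_sum_preimage: "X10 Y = sum_preimage Y {0}"
  by (simp add: X10_def sum_preimage_def coord_sum_def)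

lemma add_subgroup_Rsp: "(\<And>l. add_subgroup (Y l)) \<Longrightarrow> add_subgroup (Rsp Y)"
  unfolding add_subgroup_def Rsp_def by auto

lemma single_in_Rsp: "(\<And>l. add_subgroup (Y l)) \<Longrightarrow> x \<in> Y i \<Longrightarrow> 0(i := x) \<in> Rsp Y"
  unfolding Rsp_def add_subgroup_def by auto

lemma sum_preimage_Int: "sum_preimage Y A \<inter> sum_preimage Y B = sum_preimage Y (A \<inter> B)"
  by (auto simp: sum_preimage_def)

lemma ssum_sum_preimage:
  assumes Y: "\<And>l. add_subgroup (Y l)" and "A \<subseteq> Y i"
  shows "ssum (sum_preimage Y A) (sum_preimage Y B) = sum_preimage Y (ssum A B)"
proof
  have R: "add_subgroup (Rsp Y)" using Y by (rule add_subgroup_Rsp)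
  then show "ssum (sum_preimage Y A) (sum_preimage Y B) \<subseteq> sum_preimage Y (ssum A B)"
    unfolding sum_preimage_def add_subgroup_def by (auto intro: ssumI elim!: ssumE)
  show "sum_preimage Y (ssum A B) \<subseteq> ssum (sum_preimage Y A) (sum_preimage Y B)"
  proof
    fix \<eta> assume "\<eta> \<in> sum_preimage Y (ssum A B)"
    then obtain x y where \<eta>: "\<eta> \<in> Rsp Y" "coord_sum \<eta> = x + y" and "x \<in> A" "y \<in> B"
      unfolding sum_preimage_def by (blast elim: ssumE)
    then have x: "0(i := x) \<in> Rsp Y" using Y \<open>A \<subseteq> Y i\<close> by (blast intro: single_in_Rsp)
    have "0(i := x) + (\<eta> - 0(i := x)) \<in> ssum (sum_preimage Y A) (sum_preimage Y B)"
      using \<eta> x \<open>x \<in> A\<close> \<open>y \<in> B\<close> add_subgroup_diff[OF R \<eta>(1) x]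
      unfolding sum_preimage_def by (intro ssumI) auto
    then show "\<eta> \<in> ssum (sum_preimage Y A) (sum_preimage Y B)" by simp
  qed
qed

lemma add_subgroup_X10: "(\<And>l. add_subgroup (Y l)) \<Longrightarrow> add_subgroup (X10 Y)"
  using add_subgroup_Rsp[of Y]
  unfolding X10_eq_sum_preimage sum_preimage_def add_subgroup_def by auto

lemma coord_sum_Gsp: "g \<in> Gsp Y i \<Longrightarrow> coord_sum g = g i"
  by (cases i) (simp_all add: Gsp_def coord_sum_def)

lemma H'sp_Int_X10: "H'sp Y i \<inter> X10 Y = {v \<in> X10 Y. v i = 0}"
  by (auto simp: H'sp_def X10_def)

lemma nu1_simps:
  "nu1 X Y (Join a b) = ssum (nu1 X Y a) (nu1 X Y b)"
  "nu1 X Y (Meet a b) = nu1 X Y a \<inter> nu1 X Y b"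
  "nu1 X Y (Gx l) = H'sp Y l \<inter> X10 Y"
  by (simp_all add: nu1_def)

lemma nu1_add_subgroup:
  assumes X: "\<And>l. add_subgroup (X l)" and Y: "\<And>l. add_subgroup (Y l)"
  shows "add_subgroup (nu1 X Y a) \<and> nu1 X Y a \<subseteq> X10 Y"
proof -
  have R: "add_subgroup (Rsp Y)" and X10: "add_subgroup (X10 Y)"
    using Y by (rule add_subgroup_Rsp, rule add_subgroup_X10)
  have "add_subgroup (H'sp Y l)" "add_subgroup (G'sp X Y l)" for l
    using R X[of l] unfolding add_subgroup_def H'sp_def G'sp_def by auto
  then show ?thesis
    unfolding nu1_def using X10 by (intro ev_add_subgroup) (auto intro: add_subgroup_Int)
qed

lemma nu1_Meet_Gx_Gx:
  fixes X Y :: "idx \<Rightarrow> ('n \<Rightarrow> 'k::field) set"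
  assumes "j \<noteq> k" and "\<And>l. 0 \<in> Y l"
  shows "nu1 X Y (Meet (Gx j) (Gx k)) = {0}"
proof -
  have "v = 0" if "v I1 + v I2 + v I3 = 0" "v j = 0" "v k = 0" for v :: "idx \<Rightarrow> 'n \<Rightarrow> 'k"
  proof
    fix l show "v l = 0 l"
      using that \<open>j \<noteq> k\<close> by (cases j; cases k; cases l) (simp_all add: add_eq_0_iff2)
  qed
  then show ?thesis
    using assms(2) by (auto simp: nu1_simps H'sp_def X10_def Rsp_def)
qed

lemma nu1_Join_Meet_Gx_Gx:
  assumes "\<And>l. add_subgroup (X l)" and "\<And>l. add_subgroup (Y l)" and "j \<noteq> k"
  shows "nu1 X Y (Join c (Meet (Gx j) (Gx k))) = nu1 X Y c"
proof -
  have "nu1 X Y (Meet (Gx j) (Gx k)) = {0}"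
    using assms(2,3) by (simp add: nu1_Meet_Gx_Gx add_subgroup_def)
  moreover have "0 \<in> nu1 X Y c"
    using nu1_add_subgroup[of X Y c, OF assms(1,2)] by (simp add: add_subgroup_def)
  ultimately show ?thesis by (simp only: nu1_simps(1) ssum_zero_right)
qed

lemma ssum_X10_Gsp_eq_sum_preimage:
  assumes Y: "\<And>l. add_subgroup (Y l)" and N: "N \<subseteq> X10 Y"
  shows "ssum (X10 Y) (Gsp Y i \<inter> ssum (H'sp Y i) N) = sum_preimage Y ((\<lambda>v. v i) ` N)"
proof
  have R: "add_subgroup (Rsp Y)" using Y by (rule add_subgroup_Rsp)
  show "ssum (X10 Y) (Gsp Y i \<inter> ssum (H'sp Y i) N) \<subseteq> sum_preimage Y ((\<lambda>v. v i) ` N)"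
  proof
    fix \<eta> assume "\<eta> \<in> ssum (X10 Y) (Gsp Y i \<inter> ssum (H'sp Y i) N)"
    then obtain \<xi> g h v where \<eta>: "\<eta> = \<xi> + g" and \<xi>: "\<xi> \<in> X10 Y" and g: "g \<in> Gsp Y i"
      and "g = h + v" "h \<in> H'sp Y i" and v: "v \<in> N"
      by (auto elim!: ssumE)
    have "coord_sum g = v i"
      using coord_sum_Gsp[OF g] \<open>g = h + v\<close> \<open>h \<in> H'sp Y i\<close> by (simp add: H'sp_def)
    moreover have "coord_sum \<xi> = 0" using \<xi> by (simp add: X10_eq_sum_preimage sum_preimage_def)
    moreover have "\<eta> \<in> Rsp Y"
      using R \<xi> g unfolding \<eta> X10_def Gsp_def add_subgroup_def by blast
    ultimately show "\<eta> \<in> sum_preimage Y ((\<lambda>v. v i) ` N)"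
      using v unfolding \<eta> sum_preimage_def by auto
  qed
  show "sum_preimage Y ((\<lambda>v. v i) ` N) \<subseteq> ssum (X10 Y) (Gsp Y i \<inter> ssum (H'sp Y i) N)"
  proof
    fix \<eta> assume "\<eta> \<in> sum_preimage Y ((\<lambda>v. v i) ` N)"
    then obtain v where \<eta>: "\<eta> \<in> Rsp Y" and v: "v \<in> N" and "coord_sum \<eta> = v i"
      unfolding sum_preimage_def by blast
    define g where "g = 0(i := v i)"
    have vR: "v \<in> Rsp Y" using v N by (simp add: X10_def subset_iff)
    then have gR: "g \<in> Rsp Y" unfolding g_def using Y by (intro single_in_Rsp) (auto simp: Rsp_def)
    then have "g \<in> Gsp Y i" by (simp add: Gsp_def g_def)
    moreover have "(g - v) + v \<in> ssum (H'sp Y i) N"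
      using add_subgroup_diff[OF R gR vR] v by (intro ssumI) (simp_all add: H'sp_def g_def)
    moreover have "\<eta> - g \<in> X10 Y"
      using add_subgroup_diff[OF R \<eta> gR] \<open>coord_sum \<eta> = v i\<close>
      by (simp add: X10_eq_sum_preimage sum_preimage_def g_def)
    ultimately have "(\<eta> - g) + g \<in> ssum (X10 Y) (Gsp Y i \<inter> ssum (H'sp Y i) N)"
      by (intro ssumI) auto
    then show "\<eta> \<in> ssum (X10 Y) (Gsp Y i \<inter> ssum (H'sp Y i) N)" by simp
  qed
qed

lemma psi_eq_sum_preimage:
  assumes "\<And>l. add_subgroup (X l)" and "\<And>l. add_subgroup (Y l)"
  shows "psi X Y i a = sum_preimage Y ((\<lambda>v. v i) ` nu1 X Y a)"
  unfolding psi_def using nu1_add_subgroup[of X Y a, OF assms]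
  by (intro ssum_X10_Gsp_eq_sum_preimage assms(2)) blast

text \<open>\<open>\<nu>\<^sup>1(x\<^sub>i)\<close> is the kernel of the \<open>i\<close>-th projection on \<open>X\<^sup>1\<^sub>0\<close>.\<close>
lemma image_nu1_Meet_Join_Gx:
  assumes "\<And>l. add_subgroup (X l)" and Y: "\<And>l. add_subgroup (Y l)"
  shows "(\<lambda>v. v i) ` nu1 X Y (Meet (Join c (Gx i)) d)
    = (\<lambda>v. v i) ` nu1 X Y c \<inter> (\<lambda>v. v i) ` nu1 X Y d"
  unfolding nu1_simps H'sp_Int_X10
  using nu1_add_subgroup[OF assms] by (intro image_ssum_kernel_Int add_subgroup_X10 Y) auto

theorem mainTheorem5:
  fixes X Y :: "idx \<Rightarrow> ('n::finite \<Rightarrow> 'k::field) set"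
    and i j k :: idx and a b :: lterm
  assumes "\<And>l. is_subspace (X l)" and "\<And>l. is_subspace (Y l)"
    and "\<And>l. X l \<subseteq> Y l"
    and "i \<noteq> j" and "j \<noteq> k" and "i \<noteq> k"
  shows "ssum (psi X Y i a) (psi X Y i b) = psi X Y i (Join a b)
    \<and> psi X Y i a \<inter> psi X Y i b
           = psi X Y i (Meet (Join a (Gx i)) (Join b (Meet (Gx j) (Gx k))))
    \<and> psi X Y i a \<inter> psi X Y i b
           = psi X Y i (Meet a (Join (Join b (Gx i)) (Meet (Gx j) (Gx k))))"
proof -
  have X: "add_subgroup (X l)" and Y: "add_subgroup (Y l)" for l
    using assms(1,2) by (simp_all add: is_subspace_add_subgroup)
  have nu: "add_subgroup (nu1 X Y c) \<and> nu1 X Y c \<subseteq> X10 Y" for c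
    using X Y by (rule nu1_add_subgroup)
  define P where "P c = (\<lambda>v. v i) ` nu1 X Y c" for c
  have psi: "psi X Y i c = sum_preimage Y (P c)" for c
    unfolding P_def using X Y by (rule psi_eq_sum_preimage)
  have PY: "P c \<subseteq> Y i" for c
    using nu unfolding P_def X10_def Rsp_def by blast
  have meet: "P (Meet (Join c (Gx i)) d) = P c \<inter> P d" for c d
    unfolding P_def using X Y by (rule image_nu1_Meet_Join_Gx)
  have "nu1 X Y (Join c (Meet (Gx j) (Gx k))) = nu1 X Y c" for c
    using X Y assms(5) by (rule nu1_Join_Meet_Gx_Gx)
  then have nu_jk: "P (Join c (Meet (Gx j) (Gx k))) = P c"
    and nu_jk_Meet: "P (Meet c (Join d (Meet (Gx j) (Gx k)))) = P (Meet d c)" for c d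
    unfolding P_def by (simp_all add: nu1_simps(2) Int_commute)
  have "P (Join a b) = ssum (P a) (P b)"
    unfolding P_def nu1_simps by (rule image_ssum) simp
  moreover have "P (Meet (Join a (Gx i)) (Join b (Meet (Gx j) (Gx k)))) = P a \<inter> P b"
    by (simp add: meet nu_jk)
  moreover have "P (Meet a (Join (Join b (Gx i)) (Meet (Gx j) (Gx k)))) = P a \<inter> P b"
    by (simp add: nu_jk_Meet meet Int_commute)
  ultimately show ?thesis
    by (simp add: psi ssum_sum_preimage[of Y, OF Y PY] sum_preimage_Int)
qed

end
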